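(* Let $\rho\in\mathbb R$, let $\mathbf a=(a_{m,n})$ be a complex matrix and let $\kappa_{\mathbf a}:\mathbb H_\rho\times\mathbb H_\rho\to\mathbb C$ be a positive semi-definite Dirichlet series kernel with coefficient matrix $\mathbf a$. Then $\kappa_{\mathbf a}$ is translation-invariant, i.e. $\kappa_{\mathbf a}(s-ib,u-ib)=\kappa_{\mathbf a}(s,u)$ for all $b\in\mathbb R$ and $s,u\in\mathbb H_\rho$, if and only if $\mathbf a$ is a diagonal matrix.
   Context: $\mathbb H_\rho=\{\Re s>\rho\}$. $\kappa_{\mathbf a}(s,u)=\sum_{m,n\ge1}a_{m,n}m^{-s}n^{-\bar u}$ is a Dirichlet series kernel on $\mathbb H_\rho$ if $(s,u)\mapsto\kappa_{\mathbf a}(s,\bar u)$ is regularly convergent on $\mathbb H_\rho\times\mathbb H_\rho$ (regular convergence of $\sum c_{m,n}m^{-s}n^{-u}$ at $(s_0,u_0)$: the double series converges there and every series $\sum_m c_{m,n}m^{-s_0}$ and $\sum_n c_{m,n}n^{-u_0}$ converges). Positive semi-definite: every finite matrix $(\kappa_{\mathbf a}(s_i,s_j))$ is positive semi-definite. *)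

theory Defs
  imports "HOL-Analysis.Analysis"
begin

definition dd_partial :: "(nat \<Rightarrow> nat \<Rightarrow> complex) \<Rightarrow> complex \<Rightarrow> complex \<Rightarrow> nat \<times> nat \<Rightarrow> complex" where
  "dd_partial c s u = (\<lambda>(M, N). \<Sum>m\<in>{1..M}. \<Sum>n\<in>{1..N}.
      c m n * of_nat m powr (-s) * of_nat n powr (-u))"

text \<open>Regular convergence (Hardy) at (s,u): the double series converges (Pringsheim sense)
  and every row series and every column series converges.\<close>
definition regularly_convergent_at ::
  "(nat \<Rightarrow> nat \<Rightarrow> complex) \<Rightarrow> complex \<Rightarrow> complex \<Rightarrow> bool" where
  "regularly_convergent_at c s u \<longleftrightarrow>
     (\<exists>L. (dd_partial c s u \<longlongrightarrow> L) (sequentially \<times>\<^sub>F sequentially)) \<and>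
     (\<forall>n\<ge>1. summable (\<lambda>m. c (Suc m) n * of_nat (Suc m) powr (-s))) \<and>
     (\<forall>m\<ge>1. summable (\<lambda>n. c m (Suc n) * of_nat (Suc n) powr (-u)))"

definition halfplane :: "real \<Rightarrow> complex set" where
  "halfplane \<rho> = {s. Re s > \<rho>}"

definition ds_kernel :: "(nat \<Rightarrow> nat \<Rightarrow> complex) \<Rightarrow> complex \<Rightarrow> complex \<Rightarrow> complex" where
  "ds_kernel a s u = Lim (sequentially \<times>\<^sub>F sequentially) (dd_partial a s (cnj u))"

text \<open>Dirichlet series kernel on H_rho: (s,u) |-> kappa_a(s, conj u) regularly convergent on H_rho x H_rho.\<close>
definition is_ds_kernel :: "real \<Rightarrow> (nat \<Rightarrow> nat \<Rightarrow> complex) \<Rightarrow> bool" where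
  "is_ds_kernel \<rho> a \<longleftrightarrow>
     (\<forall>s\<in>halfplane \<rho>. \<forall>u\<in>halfplane \<rho>. regularly_convergent_at a s u)"

definition psd_kernel_on :: "complex set \<Rightarrow> (complex \<Rightarrow> complex \<Rightarrow> complex) \<Rightarrow> bool" where
  "psd_kernel_on S K \<longleftrightarrow>
     (\<forall>(k::nat) (p::nat \<Rightarrow> complex) (v::nat \<Rightarrow> complex).
        (\<forall>i<k. p i \<in> S) \<longrightarrow>
        (let q = (\<Sum>i<k. \<Sum>j<k. cnj (v i) * K (p i) (p j) * v j) in q \<in> \<real> \<and> Re q \<ge> 0))"

end

theory Submission
  imports Defs
begin

(*
  Regular convergence at the real point rho + 1 bounds the terms a m n m^(-s) n^(-u) there, so the
  double series converges absolutely on the line Re s = Re u = sigma = rho + 3, where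
    kappa (sigma - i t, sigma - i u) = sum c(m,n) m^(i t) n^(-i u),   c(m,n) = a m n (m n)^(-sigma).
  Invariance under the shift by b says that the double Dirichlet series with the absolutely summable
  coefficients c(m,n) ((m/n)^(i b) - 1) vanishes identically on this line, so these coefficients
  vanish; for m ~= n, a b with (m/n)^(i b) = -1 gives c(m,n) = 0.
  Uniqueness of the coefficients of sum d_m exp (i t omega_m) with distinct frequencies omega_m
  comes from averaging over t = j h, j < N, for a step h resonant with no frequency difference
  (all but countably many h qualify), and letting N tend to infinity with Tannery's theorem.
  Conversely, a diagonal term a m m m^(-s) m^(-conj u) depends on s + conj u only, which the shift
  leaves unchanged.
*)

lemma ex_cis_mult_ne_1:
  fixes x :: "nat \<Rightarrow> real"
  shows "\<exists>h. \<forall>m. x m \<noteq> 0 \<longrightarrow> cis (h * x m) \<noteq> 1"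
proof -
  define B where "B = (\<Union>m. range (\<lambda>j::int. of_int j * (2 * pi) / x m))"
  have "countable B"
    unfolding B_def by (intro countable_UN countable_image) auto
  then obtain h where h: "h \<notin> B"
    using uncountable_UNIV_real by (metis UNIV_eq_I)
  have "cis (h * x m) \<noteq> 1" if "x m \<noteq> 0" for m
  proof
    assume "cis (h * x m) = 1"
    then obtain j :: int where "h * x m = of_int j * (2 * pi)"
      by (auto simp: cis_conv_exp exp_eq_1 mult.commute)
    then have "h = of_int j * (2 * pi) / x m"
      using that by (simp add: field_simps)
    with h show False
      unfolding B_def by blast
  qed
  then show ?thesis by blast
qed

lemma geometric_mean_tendsto:
  fixes w :: "'a::real_normed_field"
  assumes "norm w \<le> 1"
  shows "(\<lambda>N. (\<Sum>j<N. w ^ j) / of_nat N) \<longlonglongrightarrow> (if w = 1 then 1 else 0)"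
proof (cases "w = 1")
  case True
  have "\<forall>\<^sub>F N in sequentially. (\<Sum>j<N. w ^ j) / of_nat N = 1"
    using eventually_gt_at_top[of 0] by (rule eventually_mono) (simp add: True)
  with True show ?thesis
    by (simp add: tendsto_eventually)
next
  case False
  have bound: "norm ((\<Sum>j<N. w ^ j) / of_nat N) \<le> (2 / norm (1 - w)) / real N" for N
  proof -
    have "norm (1 - w ^ N) \<le> 1 + norm w ^ N"
      using norm_triangle_ineq4[of 1 "w ^ N"] by (simp add: norm_power)
    also have "\<dots> \<le> 2"
      using assms by (simp add: power_le_one)
    finally have "norm (1 - w ^ N) / (norm (1 - w) * real N) \<le> 2 / (norm (1 - w) * real N)"
      by (simp add: divide_right_mono)
    then show ?thesis
      using False by (simp add: sum_gp_strict norm_divide norm_mult)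
  qed
  then have "(\<lambda>N. (\<Sum>j<N. w ^ j) / of_nat N) \<longlonglongrightarrow> 0"
    by (intro Lim_null_comparison[OF always_eventually lim_const_over_n]) blast
  with False show ?thesis
    by simp
qed

lemma norm_geometric_mean_le:
  fixes w :: "'a::real_normed_field"
  assumes "norm w \<le> 1"
  shows "norm ((\<Sum>j<N. w ^ j) / of_nat N) \<le> 1"
proof -
  have "norm (\<Sum>j<N. w ^ j) \<le> of_nat N"
    using norm_sum[of "\<lambda>j. w ^ j" "{..<N}"] sum_mono[of "{..<N}" "\<lambda>j. norm (w ^ j)" "\<lambda>_. 1"] assms
    by (simp add: norm_power power_le_one)
  then show ?thesis
    by (cases "N = 0") (simp_all add: norm_divide)
qed

lemma exp_series_coeff_eq_0:
  fixes d :: "nat \<Rightarrow> complex" and \<omega> :: "nat \<Rightarrow> real"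
  assumes summable: "summable (\<lambda>m. norm (d m))"
    and distinct: "inj_on \<omega> {m. d m \<noteq> 0}"
    and vanish: "\<And>t. (\<Sum>m. d m * cis (t * \<omega> m)) = 0"
  shows "d k = 0"
proof (rule ccontr)
  assume "d k \<noteq> 0"
  obtain h where h: "\<And>m. \<omega> m \<noteq> \<omega> k \<Longrightarrow> cis (h * (\<omega> m - \<omega> k)) \<noteq> 1"
    using ex_cis_mult_ne_1[of "\<lambda>m. \<omega> m - \<omega> k"] by auto
  define w where "w m = cis (h * (\<omega> m - \<omega> k))" for m
  \<comment> \<open>Average of the hypothesis at t = j h, j < N, weighted by cis (- j h \<omega> k).\<close>
  define A where "A m N = (\<Sum>j<N. w m ^ j) / of_nat N" for m N
  have summable_cis: "summable (\<lambda>m. d m * cis (t * \<omega> m))" for t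
    by (rule summable_norm_cancel) (simp add: norm_mult summable)
  have mean_vanish: "(\<Sum>m. d m * A m N) = 0" for N
  proof -
    have "d m * A m N
        = (\<Sum>j<N. d m * cis (real j * h * \<omega> m) * cis (- real j * h * \<omega> k)) / of_nat N" for m
      by (simp add: A_def w_def Complex.DeMoivre cis_mult sum_distrib_left algebra_simps)
    then have "(\<Sum>m. d m * A m N)
        = (\<Sum>m. \<Sum>j<N. d m * cis (real j * h * \<omega> m) * cis (- real j * h * \<omega> k)) / of_nat N"
      by (simp only:) (intro suminf_divide summable_sum summable_mult2 summable_cis)
    also have "\<dots> = (\<Sum>j<N. \<Sum>m. d m * cis (real j * h * \<omega> m) * cis (- real j * h * \<omega> k)) / of_nat N"
      by (subst suminf_sum) (auto intro!: summable_mult2 summable_cis)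
    also have "\<dots> = (\<Sum>j<N. (\<Sum>m. d m * cis (real j * h * \<omega> m)) * cis (- real j * h * \<omega> k)) / of_nat N"
      by (simp add: suminf_mult2[OF summable_cis])
    finally show ?thesis
      by (simp add: vanish)
  qed
  have "(\<lambda>N. d m * A m N) \<longlonglongrightarrow> d m * (if w m = 1 then 1 else 0)" for m
    unfolding A_def by (intro tendsto_mult tendsto_const geometric_mean_tendsto) (simp add: w_def)
  moreover have "d m * (if w m = 1 then 1 else 0) = (if m = k then d k else 0)" for m
    using h[of m] distinct \<open>d k \<noteq> 0\<close> by (auto simp: w_def inj_on_def)
  moreover have "norm (A m N) \<le> 1" for m N
    unfolding A_def by (rule norm_geometric_mean_le) (simp add: w_def)
  then have "\<forall>\<^sub>F (m, N) in at_top \<times>\<^sub>F sequentially. norm (d m * A m N) \<le> norm (d m)"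
    by (intro always_eventually) (auto simp: norm_mult intro: mult_left_le)
  ultimately have "(\<lambda>N. \<Sum>m. d m * A m N) \<longlonglongrightarrow> (\<Sum>m. if m = k then d k else 0)"
    using tannerys_theorem[OF _ _ summable, of "\<lambda>m N. d m * A m N"] by simp
  with \<open>d k \<noteq> 0\<close> show False
    using sums_unique[OF sums_single[of k "\<lambda>_. d k"]] by (simp add: mean_vanish LIMSEQ_const_iff)
qed

lemma nat_powr_imaginary:
  assumes "m > 0"
  shows "(of_nat m :: complex) powr (\<i> * of_real t) = cis (t * ln (real m))"
  using assms by (simp add: powr_def cis_conv_exp mult_ac)

lemma norm_nat_powr_imaginary_le: "norm ((of_nat m :: complex) powr (\<i> * of_real t)) \<le> 1"
  by (cases "m = 0") (simp_all add: nat_powr_imaginary)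

lemma nat_powr_imaginary_mult:
  "(of_nat k :: complex) powr (\<i> * of_real t) * of_nat k powr (\<i> * of_real t') = of_nat k powr (\<i> * of_real (t + t'))"
  by (simp add: distrib_left powr_add)

lemma norm_nat_powr: "norm ((of_nat m :: complex) powr z) = real m powr Re z"
  by (simp add: norm_powr_real_powr)

definition dd_phase :: "real \<Rightarrow> real \<Rightarrow> nat \<times> nat \<Rightarrow> complex" where
  "dd_phase t u x = of_nat (fst x) powr (\<i> * of_real t) * of_nat (snd x) powr (\<i> * of_real u)"

lemma norm_dd_phase_le: "norm (dd_phase t u x) \<le> 1"
  by (simp add: dd_phase_def norm_mult mult_le_one norm_nat_powr_imaginary_le)

lemma dd_phase_mult: "dd_phase t u x * dd_phase t' u' x = dd_phase (t + t') (u + u') x"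
  unfolding dd_phase_def nat_powr_imaginary_mult[symmetric] by (simp only: mult_ac)

lemma summable_on_mult_bounded:
  fixes f g :: "'a \<Rightarrow> complex"
  assumes "f summable_on A" and "\<And>x. x \<in> A \<Longrightarrow> norm (g x) \<le> B"
  shows "(\<lambda>x. f x * g x) summable_on A"
proof -
  have "(\<lambda>x. norm (f x) * B) summable_on A"
    using assms(1) by (intro summable_on_cmult_left) (simp add: summable_on_iff_abs_summable_on_complex)
  then have "(\<lambda>x. norm (f x * g x)) summable_on A"
    by (rule summable_on_comparison_test) (auto simp: norm_mult intro: mult_left_mono assms(2))
  then show ?thesis
    by (rule abs_summable_summable)
qed

lemma summable_on_product_nonneg:
  fixes f :: "'a \<Rightarrow> real" and g :: "'b \<Rightarrow> real"
  assumes "f summable_on A" and "g summable_on B"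
    and "\<And>x. x \<in> A \<Longrightarrow> f x \<ge> 0" and "\<And>y. y \<in> B \<Longrightarrow> g y \<ge> 0"
  shows "(\<lambda>(x, y). f x * g y) summable_on A \<times> B"
proof (rule summable_on_SigmaI)
  show "((\<lambda>y. case (x, y) of (x, y) \<Rightarrow> f x * g y) has_sum f x * infsum g B) B" for x
    using assms(2) by (simp add: has_sum_cmult_right)
  show "(\<lambda>x. f x * infsum g B) summable_on A"
    using assms(1) by (rule summable_on_cmult_left)
qed (use assms(3,4) in auto)

lemma summable_on_nat_powr: "a > 1 \<Longrightarrow> (\<lambda>m::nat. real m powr (-a)) summable_on UNIV"
  by (simp add: summable_on_UNIV_nonneg_real_iff summable_real_powr_iff)

lemma infsum_diff:
  fixes f g :: "'a \<Rightarrow> 'b::{topological_ab_group_add, t2_space}"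
  assumes "f summable_on A" and "g summable_on A"
  shows "infsum (\<lambda>x. f x - g x) A = infsum f A - infsum g A"
  using infsum_add[OF assms(1) summable_on_uminus[THEN iffD2, OF assms(2)]] by (simp add: infsum_uminus)

lemma dirichlet_series_coeff_eq_0:
  fixes d :: "nat \<Rightarrow> complex"
  assumes summable: "d summable_on UNIV"
    and vanish: "\<And>t::real. (\<Sum>\<^sub>\<infinity>m. d m * of_nat m powr (\<i> * of_real t)) = 0"
    and "k > 0"
  shows "d k = 0"
proof -
  \<comment> \<open>At m = 0 we have 0 powr z = 0 but cis (t * ln 0) = 1, and ln 0 = ln 1.\<close>
  define d' where "d' m = (if m = 0 then 0 else d m)" for m
  have "summable (\<lambda>m. norm (d m))"
    using summable by (simp add: summable_on_iff_abs_summable_on_complex summable_on_imp_summable)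
  then have "summable (\<lambda>m. norm (d' m))"
    by (rule summable_comparison_test[rotated]) (simp add: d'_def)
  moreover have "inj_on (\<lambda>m. ln (real m)) {m. d' m \<noteq> 0}"
    by (auto simp: inj_on_def d'_def)
  moreover have "(\<Sum>m. d' m * cis (t * ln (real m))) = 0" for t
  proof -
    have "d' m * cis (t * ln (real m)) = d m * of_nat m powr (\<i> * of_real t)" for m
      by (cases "m = 0") (simp_all add: d'_def nat_powr_imaginary)
    moreover have "(\<lambda>m. d m * of_nat m powr (\<i> * of_real t)) summable_on UNIV"
      using summable norm_nat_powr_imaginary_le by (rule summable_on_mult_bounded)
    then have "(\<lambda>m. d m * of_nat m powr (\<i> * of_real t)) sums 0"
      using vanish[of t] by (metis has_sum_imp_sums has_sum_infsum)
    ultimately show ?thesis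
      by (simp add: sums_iff)
  qed
  ultimately have "d' k = 0"
    by (rule exp_series_coeff_eq_0)
  with \<open>k > 0\<close> show ?thesis
    by (simp add: d'_def)
qed

lemma double_dirichlet_series_coeff_eq_0:
  fixes e :: "nat \<times> nat \<Rightarrow> complex"
  assumes summable: "e summable_on UNIV"
    and vanish: "\<And>t u. (\<Sum>\<^sub>\<infinity>x. e x * dd_phase t u x) = 0"
    and "m > 0" and "n > 0"
  shows "e (m, n) = 0"
proof -
  define row where "row u m = (\<Sum>\<^sub>\<infinity>n. e (m, n) * of_nat n powr (\<i> * of_real u))" for u m
  have "row u m = 0" for u
  proof (rule dirichlet_series_coeff_eq_0[OF _ _ \<open>m > 0\<close>])
    have "(\<lambda>(m, n). e (m, n) * of_nat n powr (\<i> * of_real u)) summable_on UNIV \<times> UNIV"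
      using summable_on_mult_bounded[OF summable, of "\<lambda>(m, n). of_nat n powr (\<i> * of_real u)" 1]
      by (simp add: case_prod_unfold norm_nat_powr_imaginary_le)
    then show "row u summable_on UNIV"
      unfolding row_def by (rule summable_on_Sigma_banach)
  next
    fix t :: real
    have "(\<lambda>x. e x * dd_phase t u x) summable_on UNIV"
      using summable norm_dd_phase_le by (rule summable_on_mult_bounded)
    then have "(\<lambda>(m, n). e (m, n) * of_nat m powr (\<i> * of_real t) * of_nat n powr (\<i> * of_real u))
        summable_on UNIV \<times> UNIV"
      by (simp add: dd_phase_def case_prod_unfold mult.assoc)
    from infsum_Sigma'_banach[OF this] vanish[of t u]
    have "(\<Sum>\<^sub>\<infinity>m. \<Sum>\<^sub>\<infinity>n. e (m, n) * of_nat m powr (\<i> * of_real t) * of_nat n powr (\<i> * of_real u)) = 0"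
      by (simp add: dd_phase_def case_prod_unfold mult.assoc)
    then show "(\<Sum>\<^sub>\<infinity>m. row u m * of_nat m powr (\<i> * of_real t)) = 0"
      unfolding row_def by (simp add: infsum_cmult_right' flip: infsum_cmult_left') (simp add: mult_ac)
  qed
  moreover have "(\<lambda>n. e (m, n)) summable_on UNIV"
    using summable_on_SigmaD1[of "\<lambda>m n. e (m, n)" UNIV "\<lambda>_. UNIV"] summable by simp
  ultimately show ?thesis
    using dirichlet_series_coeff_eq_0[OF _ _ \<open>n > 0\<close>] unfolding row_def by blast
qed

(* Index 0 contributes nothing since 0 powr z = 0, so sums over {1..M}, as in dd_partial,
   and over {..M} agree. *)
definition dd_term :: "(nat \<Rightarrow> nat \<Rightarrow> complex) \<Rightarrow> complex \<Rightarrow> complex \<Rightarrow> nat \<times> nat \<Rightarrow> complex" where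
  "dd_term c s u = (\<lambda>(m, n). c m n * of_nat m powr (-s) * of_nat n powr (-u))"

lemma dd_partial_eq_sum_dd_term:
  "dd_partial c s u (M, N) = (\<Sum>m\<le>M. \<Sum>n\<le>N. dd_term c s u (m, n))"
  by (simp add: dd_partial_def dd_term_def sum_shift_lb_Suc0_0 atLeast0AtMost)

lemma dd_term_eq_double_difference:
  "dd_term c s u (Suc i, Suc j) =
     dd_partial c s u (Suc i, Suc j) - dd_partial c s u (i, Suc j)
     - dd_partial c s u (Suc i, j) + dd_partial c s u (i, j)"
  by (simp add: dd_partial_eq_sum_dd_term sum.distrib algebra_simps)

lemma dd_term_vertical_shift:
  "dd_term c (s - \<i> * of_real t) (u + \<i> * of_real t') x = dd_term c s u x * dd_phase t (- t') x"
proof -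
  have "of_nat m powr (-(s - \<i> * of_real t)) = of_nat m powr (-s) * of_nat m powr (\<i> * of_real t)"
    and "of_nat m powr (-(u + \<i> * of_real t')) = of_nat m powr (-u) * of_nat m powr (\<i> * of_real (- t'))"
    for m :: nat
    by (simp_all flip: powr_add)
  then show ?thesis
    by (simp add: dd_term_def dd_phase_def case_prod_unfold mult_ac)
qed

lemma tendsto_dd_partial_imp_bounded_tail:
  assumes "(dd_partial c s u \<longlongrightarrow> L) (sequentially \<times>\<^sub>F sequentially)"
  obtains K where "bounded (dd_term c s u ` ({K<..} \<times> {K<..}))"
proof -
  obtain K where K: "\<And>M N. M \<ge> K \<Longrightarrow> N \<ge> K \<Longrightarrow> norm (dd_partial c s u (M, N) - L) < 1"
    using tendstoD[OF assms zero_less_one] unfolding eventually_prod_sequentially dist_norm by blast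
  have "norm (dd_term c s u (Suc i, Suc j)) \<le> 4" if "i \<ge> K" "j \<ge> K" for i j
  proof -
    let ?P = "\<lambda>M N. dd_partial c s u (M, N) - L"
    have "dd_term c s u (Suc i, Suc j) = ?P (Suc i) (Suc j) - ?P i (Suc j) - ?P (Suc i) j + ?P i j"
      by (simp add: dd_term_eq_double_difference)
    also have "norm \<dots> \<le> norm (?P (Suc i) (Suc j)) + norm (?P i (Suc j)) + norm (?P (Suc i) j) + norm (?P i j)"
      by (smt (verit) norm_triangle_ineq norm_triangle_ineq4)
    finally show ?thesis
      using K that by (smt (verit) le_Suc_eq)
  qed
  then have "norm (dd_term c s u (m, n)) \<le> 4" if "m > K" "n > K" for m n
    using that by (metis Suc_pred' gr_implies_not0 less_Suc_eq_le not_gr_zero)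
  then show ?thesis
    by (intro that[of K] boundedI[of _ 4]) auto
qed

lemma regularly_convergent_imp_bounded_terms:
  assumes "regularly_convergent_at c s u"
  shows "bounded (range (dd_term c s u))"
proof -
  obtain L where L: "(dd_partial c s u \<longlongrightarrow> L) (sequentially \<times>\<^sub>F sequentially)"
    and rows: "\<And>n. n \<ge> 1 \<Longrightarrow> summable (\<lambda>m. c (Suc m) n * of_nat (Suc m) powr (-s))"
    and cols: "\<And>m. m \<ge> 1 \<Longrightarrow> summable (\<lambda>n. c m (Suc n) * of_nat (Suc n) powr (-u))"
    using assms unfolding regularly_convergent_at_def by blast
  obtain K where tail: "bounded (dd_term c s u ` ({K<..} \<times> {K<..}))"
    using tendsto_dd_partial_imp_bounded_tail[OF L] .
  have row: "bounded (range (\<lambda>n. dd_term c s u (m, n)))" for m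
  proof (cases "m = 0")
    case False
    then have "summable (\<lambda>n. of_nat m powr (-s) * (c m n * of_nat n powr (-u)))"
      using cols[of m] summable_Suc_iff[of "\<lambda>n. c m n * of_nat n powr (-u)"] by (simp add: summable_mult)
    then show ?thesis
      by (auto dest!: summable_imp_bounded simp: dd_term_def mult_ac)
  qed (simp add: dd_term_def)
  have col: "bounded (range (\<lambda>m. dd_term c s u (m, n)))" for n
  proof (cases "n = 0")
    case False
    then have "summable (\<lambda>m. (c m n * of_nat m powr (-s)) * of_nat n powr (-u))"
      using rows[of n] summable_Suc_iff[of "\<lambda>m. c m n * of_nat m powr (-s)"] by (simp add: summable_mult2)
    then show ?thesis
      by (auto dest!: summable_imp_bounded simp: dd_term_def mult_ac)
  qed (simp add: dd_term_def)
  have "range (dd_term c s u) \<subseteq> dd_term c s u ` ({K<..} \<times> {K<..})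
      \<union> (\<Union>m\<le>K. range (\<lambda>n. dd_term c s u (m, n))) \<union> (\<Union>n\<le>K. range (\<lambda>m. dd_term c s u (m, n)))"
    (is "_ \<subseteq> ?cover")
  proof
    fix z assume "z \<in> range (dd_term c s u)"
    then obtain m n where z: "z = dd_term c s u (m, n)"
      by auto
    consider "m \<le> K" | "n \<le> K" | "m > K" "n > K"
      by linarith
    then show "z \<in> ?cover"
      by cases (use z in blast)+
  qed
  moreover have "bounded ?cover"
    using tail row col by auto
  ultimately show ?thesis
    by (rule bounded_subset[rotated])
qed

lemma bounded_terms_imp_summable_on:
  assumes "bounded (range (dd_term c s0 u0))" and "Re s > Re s0 + 1" and "Re u > Re u0 + 1"
  shows "dd_term c s u summable_on UNIV"
proof -
  obtain C where C: "\<And>x. norm (dd_term c s0 u0 x) \<le> C"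
    using assms(1) by (auto simp: bounded_iff)
  define \<alpha> \<beta> where "\<alpha> = Re s - Re s0" and "\<beta> = Re u - Re u0"
  define w where "w = (\<lambda>(m::nat, n::nat). C * (real m powr (-\<alpha>) * real n powr (-\<beta>)))"
  have "norm (dd_term c s u (m, n)) \<le> w (m, n)" for m n
  proof (cases "m = 0 \<or> n = 0")
    case False
    have "real k powr (-Re s) = real k powr (-Re s0) * real k powr (-\<alpha>)"
      and "real k powr (-Re u) = real k powr (-Re u0) * real k powr (-\<beta>)" for k :: nat
      by (simp_all add: \<alpha>_def \<beta>_def flip: powr_add)
    then have "norm (dd_term c s u (m, n)) = norm (dd_term c s0 u0 (m, n)) * (real m powr (-\<alpha>) * real n powr (-\<beta>))"
      by (simp add: dd_term_def norm_mult norm_nat_powr mult_ac)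
    then show ?thesis
      using C by (simp add: w_def mult_right_mono)
  qed (auto simp: dd_term_def w_def)
  then have bound: "norm (dd_term c s u x) \<le> w x" for x
    by (cases x) simp
  have "\<alpha> > 1" and "\<beta> > 1"
    using assms(2,3) by (simp_all add: \<alpha>_def \<beta>_def)
  then have "w summable_on UNIV"
    using summable_on_cmult_right[OF summable_on_product_nonneg[OF
        summable_on_nat_powr[of \<alpha>] summable_on_nat_powr[of \<beta>]], of C]
    by (simp add: w_def case_prod_unfold)
  then have "(\<lambda>x. norm (dd_term c s u x)) summable_on UNIV"
    by (rule summable_on_comparison_test) (simp_all add: bound)
  then show ?thesis
    by (rule abs_summable_summable)
qed

lemma has_sum_imp_tendsto_rectangle_sums:
  fixes g :: "nat \<times> nat \<Rightarrow> 'a::{comm_monoid_add, topological_space}"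
  assumes "(g has_sum S) UNIV"
  shows "((\<lambda>(M, N). sum g ({..M} \<times> {..N})) \<longlongrightarrow> S) (sequentially \<times>\<^sub>F sequentially)"
proof -
  have "filterlim (\<lambda>(M, N). {..M} \<times> {..N}) (finite_subsets_at_top UNIV) (sequentially \<times>\<^sub>F sequentially)"
    unfolding filterlim_finite_subsets_at_top
  proof (intro allI impI, elim conjE)
    fix X :: "(nat \<times> nat) set"
    assume "finite X"
    then obtain k where "fst ` X \<union> snd ` X \<subseteq> {..k}"
      by (meson finite_Un finite_imageI finite_nat_iff_bounded_le)
    then have "X \<subseteq> {..k} \<times> {..k}"
      by force
    then show "\<forall>\<^sub>F x in sequentially \<times>\<^sub>F sequentially. finite (case x of (M, N) \<Rightarrow> {..M} \<times> {..N})
        \<and> X \<subseteq> (case x of (M, N) \<Rightarrow> {..M} \<times> {..N}) \<and> (case x of (M, N) \<Rightarrow> {..M} \<times> {..N}) \<subseteq> UNIV"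
      unfolding eventually_prod_sequentially by (intro exI[of _ k]) force
  qed
  from filterlim_compose[OF assms[unfolded has_sum_def] this] show ?thesis
    by (simp add: case_prod_unfold)
qed

lemma ds_kernel_eq_infsum:
  assumes "dd_term c s (cnj u) summable_on UNIV"
  shows "ds_kernel c s u = infsum (dd_term c s (cnj u)) UNIV"
proof -
  have "dd_partial c s (cnj u) = (\<lambda>(M, N). sum (dd_term c s (cnj u)) ({..M} \<times> {..N}))"
    by (auto simp: dd_partial_eq_sum_dd_term sum.cartesian_product)
  then have "(dd_partial c s (cnj u) \<longlongrightarrow> infsum (dd_term c s (cnj u)) UNIV) (sequentially \<times>\<^sub>F sequentially)"
    using has_sum_imp_tendsto_rectangle_sums[OF has_sum_infsum[OF assms]] by simp
  then show ?thesis
    unfolding ds_kernel_def by (intro tendsto_Lim) (simp_all add: prod_filter_eq_bot)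
qed

lemma ds_kernel_on_vertical_line:
  fixes \<sigma> :: real
  assumes "dd_term a \<sigma> \<sigma> summable_on UNIV"
  shows "ds_kernel a (\<sigma> - \<i> * of_real t) (\<sigma> - \<i> * of_real u) = (\<Sum>\<^sub>\<infinity>x. dd_term a \<sigma> \<sigma> x * dd_phase t (- u) x)"
proof -
  have "dd_term a (\<sigma> - \<i> * of_real t) (cnj (\<sigma> - \<i> * of_real u)) = (\<lambda>x. dd_term a \<sigma> \<sigma> x * dd_phase t (- u) x)"
    by (simp add: fun_eq_iff dd_term_vertical_shift)
  moreover have "(\<lambda>x. dd_term a \<sigma> \<sigma> x * dd_phase t (- u) x) summable_on UNIV"
    using assms norm_dd_phase_le by (rule summable_on_mult_bounded)
  ultimately show ?thesis
    by (simp add: ds_kernel_eq_infsum)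
qed

lemma translation_invariant_on_vertical_line_imp_phase_eq_1:
  fixes \<sigma> :: real
  assumes summable: "dd_term a \<sigma> \<sigma> summable_on UNIV"
    and invariant: "\<And>t u. ds_kernel a (\<sigma> - \<i> * of_real (b + t)) (\<sigma> - \<i> * of_real (b + u))
                          = ds_kernel a (\<sigma> - \<i> * of_real t) (\<sigma> - \<i> * of_real u)"
    and "m > 0" and "n > 0"
  shows "dd_term a \<sigma> \<sigma> (m, n) = 0 \<or> dd_phase b (- b) (m, n) = 1"
proof -
  let ?c = "dd_term a \<sigma> \<sigma>"
  have "?c (m, n) * (dd_phase b (- b) (m, n) - 1) = 0"
  proof (rule double_dirichlet_series_coeff_eq_0[where e = "\<lambda>x. ?c x * (dd_phase b (- b) x - 1)"])
    have "norm (dd_phase b (- b) x - 1) \<le> 2" for x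
      using norm_triangle_ineq4[of "dd_phase b (- b) x" 1] norm_dd_phase_le[of b "- b" x] by simp
    with summable show "(\<lambda>x. ?c x * (dd_phase b (- b) x - 1)) summable_on UNIV"
      by (rule summable_on_mult_bounded)
  next
    fix t u
    have "(\<lambda>x. ?c x * dd_phase t' u' x) summable_on UNIV" for t' u'
      using summable norm_dd_phase_le by (rule summable_on_mult_bounded)
    moreover have "(\<Sum>\<^sub>\<infinity>x. ?c x * dd_phase (b + t) (- b + u) x) = (\<Sum>\<^sub>\<infinity>x. ?c x * dd_phase t u x)"
      using invariant[of t "- u"] unfolding ds_kernel_on_vertical_line[OF summable] by simp
    moreover have "?c x * (dd_phase b (- b) x - 1) * dd_phase t u x
        = ?c x * dd_phase (b + t) (- b + u) x - ?c x * dd_phase t u x" for x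
      by (simp add: left_diff_distrib right_diff_distrib mult.assoc dd_phase_mult)
    ultimately show "(\<Sum>\<^sub>\<infinity>x. ?c x * (dd_phase b (- b) x - 1) * dd_phase t u x) = 0"
      by (simp add: infsum_diff)
  qed (use assms in auto)
  then show ?thesis
    by simp
qed

lemma ex_dd_phase_eq_minus_1:
  assumes "m > 0" and "n > 0" and "m \<noteq> n"
  shows "\<exists>b. dd_phase b (- b) (m, n) = -1"
proof
  define b where "b = pi / (ln (real m) - ln (real n))"
  have "ln (real m) \<noteq> ln (real n)"
    using assms by simp
  have "b * ln (real m) + - b * ln (real n) = b * (ln (real m) - ln (real n))"
    by (simp add: algebra_simps)
  also have "\<dots> = pi"
    using \<open>ln (real m) \<noteq> ln (real n)\<close> by (simp add: b_def)
  finally show "dd_phase b (- b) (m, n) = -1"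
    unfolding dd_phase_def fst_conv snd_conv nat_powr_imaginary[OF \<open>m > 0\<close>]
      nat_powr_imaginary[OF \<open>n > 0\<close>] cis_mult
    by simp
qed

lemma translation_invariant_ds_kernel_imp_diagonal:
  assumes kernel: "is_ds_kernel \<rho> a"
    and invariant: "\<forall>b::real. \<forall>s\<in>halfplane \<rho>. \<forall>u\<in>halfplane \<rho>.
            ds_kernel a (s - \<i> * of_real b) (u - \<i> * of_real b) = ds_kernel a s u"
    and "m > 0" and "n > 0" and "m \<noteq> n"
  shows "a m n = 0"
proof -
  define \<sigma> where "\<sigma> = \<rho> + 3"
  have "bounded (range (dd_term a (of_real (\<rho> + 1)) (of_real (\<rho> + 1))))"
    using kernel by (intro regularly_convergent_imp_bounded_terms) (simp add: is_ds_kernel_def halfplane_def)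
  then have summable: "dd_term a \<sigma> \<sigma> summable_on UNIV"
    by (rule bounded_terms_imp_summable_on) (simp_all add: \<sigma>_def)
  have on_line: "\<sigma> - \<i> * of_real t \<in> halfplane \<rho>" for t
    by (simp add: halfplane_def \<sigma>_def)
  have shift: "ds_kernel a (s - \<i> * of_real b) (u - \<i> * of_real b) = ds_kernel a s u"
    if "s \<in> halfplane \<rho>" and "u \<in> halfplane \<rho>" for s u b
    using invariant that by blast
  have "ds_kernel a (\<sigma> - \<i> * of_real (b + t)) (\<sigma> - \<i> * of_real (b + u))
      = ds_kernel a (\<sigma> - \<i> * of_real t) (\<sigma> - \<i> * of_real u)" for b t u
    using shift[OF on_line[of t] on_line[of u], of b] by (simp add: algebra_simps)
  from translation_invariant_on_vertical_line_imp_phase_eq_1[OF summable this \<open>m > 0\<close> \<open>n > 0\<close>]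
    ex_dd_phase_eq_minus_1[OF assms(3-5)]
  have "dd_term a \<sigma> \<sigma> (m, n) = 0"
    by (metis minus_equation_iff one_neq_neg_one)
  with assms(3,4) show ?thesis
    by (simp add: dd_term_def)
qed

lemma diagonal_imp_translation_invariant_ds_kernel:
  assumes "\<forall>m\<ge>1. \<forall>n\<ge>1. m \<noteq> n \<longrightarrow> a m n = 0"
  shows "ds_kernel a (s - \<i> * of_real b) (u - \<i> * of_real b) = ds_kernel a s u"
proof -
  have "dd_term a (s - \<i> * of_real b) (cnj u + \<i> * of_real b) x = dd_term a s (cnj u) x" for x
  proof (cases "fst x = snd x")
    case True
    then have "dd_phase b (- b) x = (if fst x = 0 then 0 else 1)"
      unfolding dd_phase_def True nat_powr_imaginary_mult by simp
    then show ?thesis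
      by (simp add: dd_term_vertical_shift) (simp add: dd_term_def case_prod_unfold)
  next
    case False
    then have "dd_term a s' u' x = 0" for s' u'
      using assms by (cases x) (auto simp: dd_term_def Suc_le_eq)
    then show ?thesis
      by simp
  qed
  then have "dd_partial a (s - \<i> * of_real b) (cnj (u - \<i> * of_real b)) = dd_partial a s (cnj u)"
    by (auto simp: fun_eq_iff dd_partial_eq_sum_dd_term)
  then show ?thesis
    by (simp add: ds_kernel_def)
qed

theorem proposition5p1:
  fixes \<rho> :: real and a :: "nat \<Rightarrow> nat \<Rightarrow> complex"
  assumes "is_ds_kernel \<rho> a"
    and "psd_kernel_on (halfplane \<rho>) (ds_kernel a)"
  shows "(\<forall>b::real. \<forall>s\<in>halfplane \<rho>. \<forall>u\<in>halfplane \<rho>.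
            ds_kernel a (s - \<i> * of_real b) (u - \<i> * of_real b) = ds_kernel a s u)
         \<longleftrightarrow> (\<forall>m\<ge>1. \<forall>n\<ge>1. m \<noteq> n \<longrightarrow> a m n = 0)"
  using translation_invariant_ds_kernel_imp_diagonal[OF assms(1)]
    diagonal_imp_translation_invariant_ds_kernel
  by (metis One_nat_def Suc_le_eq)

end
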